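(* Let $m,n\ge 5$ be integers and let $C_m\Box C_n$ be the torus grid graph. Then its disjunctive domination number satisfies $$\frac{mn}{9}\le \gamma_2^d(C_m\Box C_n)\le 2\left\lceil \frac{m}{4}\right\rceil\cdot\left\lceil \frac{n}{4}\right\rceil.$$
   Context: $C_k$ denotes the cycle on $k$ vertices, and $G\Box H$ is the Cartesian product: vertex set $V(G)\times V(H)$, with $(g,h)\sim(g',h')$ iff either $g=g'$ and $hh'\in E(H)$, or $h=h'$ and $gg'\in E(G)$. For a simple graph $\Gamma$ and a vertex $v$, let $\Gamma(v)$ be the set of vertices at distance $1$ from $v$ and $\Gamma_2(v)$ the set of vertices at distance exactly $2$ from $v$. A set $S\subseteq V(\Gamma)$ is a disjunctive dominating set if every vertex $v\notin S$ satisfies $|\Gamma(v)\cap S|\ge 1$ or $|\Gamma_2(v)\cap S|\ge 2$. The disjunctive domination number $\gamma_2^d(\Gamma)$ is the minimum cardinality of a disjunctive dominating set of $\Gamma$. *)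

theory Defs
  imports Main Complex_Main
begin

(* A simple graph is given by a vertex set V and a symmetric irreflexive
   adjacency relation E (only used on V). *)

definition nbhd :: "'a set \<Rightarrow> ('a \<Rightarrow> 'a \<Rightarrow> bool) \<Rightarrow> 'a \<Rightarrow> 'a set" where
  "nbhd V E v = {u \<in> V. E v u}"

definition nbhd2 :: "'a set \<Rightarrow> ('a \<Rightarrow> 'a \<Rightarrow> bool) \<Rightarrow> 'a \<Rightarrow> 'a set" where
  "nbhd2 V E v = {u \<in> V. u \<noteq> v \<and> \<not> E v u \<and> (\<exists>w\<in>V. E v w \<and> E w u)}"

definition disj_dom_set :: "'a set \<Rightarrow> ('a \<Rightarrow> 'a \<Rightarrow> bool) \<Rightarrow> 'a set \<Rightarrow> bool" where
  "disj_dom_set V E S \<longleftrightarrow> S \<subseteq> V \<and>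
     (\<forall>v \<in> V - S. card (nbhd V E v \<inter> S) \<ge> 1 \<or> card (nbhd2 V E v \<inter> S) \<ge> 2)"

definition disj_dom_number :: "'a set \<Rightarrow> ('a \<Rightarrow> 'a \<Rightarrow> bool) \<Rightarrow> nat" where
  "disj_dom_number V E = Min (card ` {S. disj_dom_set V E S})"

definition cyc_adj :: "nat \<Rightarrow> nat \<Rightarrow> nat \<Rightarrow> bool" where
  "cyc_adj k a b \<longleftrightarrow> a \<noteq> b \<and> (b = (a + 1) mod k \<or> a = (b + 1) mod k)"

definition torus_V :: "nat \<Rightarrow> nat \<Rightarrow> (nat \<times> nat) set" where
  "torus_V m n = {0..<m} \<times> {0..<n}"

definition torus_E :: "nat \<Rightarrow> nat \<Rightarrow> nat \<times> nat \<Rightarrow> nat \<times> nat \<Rightarrow> bool" where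
  "torus_E m n p q \<longleftrightarrow>
     (fst p = fst q \<and> cyc_adj n (snd p) (snd q)) \<or>
     (snd p = snd q \<and> cyc_adj m (fst p) (fst q))"

end

theory Submission
  imports Defs "HOL-Library.Product_Plus"
begin

(* Lower bound: every vertex outside a disjunctive dominating set S has a neighbour in S or two
   vertices of S at distance 2, so weighting neighbours by 2 and distance-2 vertices by 1 and
   counting from the side of S gives 2 |V| <= (2 + 2 * 4 + 8) |S|, as every vertex of the torus
   has 4 neighbours and 8 vertices at distance 2.

   Upper bound: on each cycle take A = multiples of 4 and B = the vertices that are 2 mod 4 (plus
   the last vertex when the length is 2 mod 4). Every vertex x of the cycle satisfies
   d(x, A) + d(x, B) <= 2, hence the nearest vertices of A x A' and of B x B' to a vertex v of the
   torus lie at total distance at most 4 from v: one of them is a neighbour of v, or both are at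
   distance exactly 2 (and distinct since A and B are disjoint). There are at most
   2 ceil(m/4) ceil(n/4) such vertices. *)

section \<open>Disjunctive domination in finite graphs\<close>

lemma sum_card_inter_symmetric:
  assumes "finite V" "S \<subseteq> V" "\<And>v. N v \<subseteq> V"
    and "\<And>u v. u \<in> V \<Longrightarrow> v \<in> V \<Longrightarrow> u \<in> N v \<longleftrightarrow> v \<in> N u"
  shows "(\<Sum>v\<in>V. card (N v \<inter> S)) = (\<Sum>u\<in>S. card (N u))"
proof -
  have fin_S: "finite S" using assms(1,2) finite_subset by blast
  have "(\<Sum>v\<in>V. card (N v \<inter> S)) = (\<Sum>v\<in>V. \<Sum>u\<in>{u. u \<in> S \<and> u \<in> N v}. 1)"
    by (intro sum.cong) (auto simp: Int_def conj_commute)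
  also have "\<dots> = (\<Sum>u\<in>S. \<Sum>v\<in>{v. v \<in> V \<and> u \<in> N v}. 1)"
    by (rule sum.swap_restrict[OF assms(1) fin_S])
  also have "\<dots> = (\<Sum>u\<in>S. card (N u))"
  proof (intro sum.cong refl)
    fix u assume "u \<in> S"
    then have "{v. v \<in> V \<and> u \<in> N v} = N u" using assms(2-4) by blast
    then show "(\<Sum>v\<in>{v. v \<in> V \<and> u \<in> N v}. 1) = card (N u)" by simp
  qed
  finally show ?thesis .
qed

lemma nbhd_subset: "nbhd V E v \<subseteq> V"
  unfolding nbhd_def by blast

lemma nbhd2_subset: "nbhd2 V E v \<subseteq> V"
  unfolding nbhd2_def by blast

lemma nbhd_commute:
  "(\<And>x y. E x y \<longleftrightarrow> E y x) \<Longrightarrow> u \<in> V \<Longrightarrow> v \<in> V \<Longrightarrow>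
    u \<in> nbhd V E v \<longleftrightarrow> v \<in> nbhd V E u"
  unfolding nbhd_def by blast

lemma nbhd2_commute:
  "(\<And>x y. E x y \<longleftrightarrow> E y x) \<Longrightarrow> u \<in> V \<Longrightarrow> v \<in> V \<Longrightarrow>
    u \<in> nbhd2 V E v \<longleftrightarrow> v \<in> nbhd2 V E u"
  unfolding nbhd2_def by blast

lemma disj_dom_set_card_lower_bound:
  assumes "finite V" "disj_dom_set V E S" "\<And>x y. E x y \<longleftrightarrow> E y x"
    and "\<And>v. v \<in> V \<Longrightarrow> card (nbhd V E v) \<le> r"
    and "\<And>v. v \<in> V \<Longrightarrow> card (nbhd2 V E v) \<le> s"
  shows "2 * card V \<le> (2 + 2 * r + s) * card S"
proof -
  have S: "S \<subseteq> V" using assms(2) unfolding disj_dom_set_def by blast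
  define w where "w v = 2 * card (nbhd V E v \<inter> S) + card (nbhd2 V E v \<inter> S)" for v
  have "2 * card V = 2 * card S + (\<Sum>v\<in>V - S. 2)"
    using S assms(1) card_Diff_subset[of S V] card_mono[OF assms(1) S] finite_subset[OF S]
    by simp
  also have "(\<Sum>v\<in>V - S. 2) \<le> (\<Sum>v\<in>V - S. w v)"
  proof (rule sum_mono)
    fix v assume "v \<in> V - S"
    then have "1 \<le> card (nbhd V E v \<inter> S) \<or> 2 \<le> card (nbhd2 V E v \<inter> S)"
      using assms(2) unfolding disj_dom_set_def by blast
    then show "2 \<le> w v" unfolding w_def by linarith
  qed
  also have "\<dots> \<le> (\<Sum>v\<in>V. w v)"
    using assms(1) by (intro sum_mono2) auto
  also have "\<dots> = 2 * (\<Sum>u\<in>S. card (nbhd V E u)) + (\<Sum>u\<in>S. card (nbhd2 V E u))"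
    unfolding w_def sum.distrib sum_distrib_left[symmetric]
    using sum_card_inter_symmetric[OF assms(1) S nbhd_subset nbhd_commute[OF assms(3)]]
      sum_card_inter_symmetric[OF assms(1) S nbhd2_subset nbhd2_commute[OF assms(3)]]
    by simp
  also have "\<dots> \<le> 2 * (card S * r) + card S * s"
    using sum_bounded_above[of S "\<lambda>u. card (nbhd V E u)" r]
      sum_bounded_above[of S "\<lambda>u. card (nbhd2 V E u)" s] S assms(4,5)
    by (intro add_mono mult_le_mono2) auto
  finally show ?thesis by (simp add: algebra_simps)
qed

lemma finite_disj_dom_sets: "finite V \<Longrightarrow> finite {S. disj_dom_set V E S}"
  unfolding disj_dom_set_def by (rule finite_subset[of _ "Pow V"]) auto

lemma disj_dom_number_le:
  "finite V \<Longrightarrow> disj_dom_set V E S \<Longrightarrow> disj_dom_number V E \<le> card S"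
  unfolding disj_dom_number_def by (auto intro: Min_le finite_disj_dom_sets)

lemma disj_dom_number_attained:
  assumes "finite V"
  obtains S where "disj_dom_set V E S" "card S = disj_dom_number V E"
proof -
  have "disj_dom_set V E V" unfolding disj_dom_set_def by blast
  then have "disj_dom_number V E \<in> card ` {S. disj_dom_set V E S}"
    unfolding disj_dom_number_def using finite_disj_dom_sets[OF assms]
    by (intro Min_in) auto
  then show ?thesis using that by auto
qed

section \<open>Offsets on cycles and tori\<close>

definition cyc_shift :: "nat \<Rightarrow> nat \<Rightarrow> int \<Rightarrow> nat" where
  "cyc_shift k a d = nat ((int a + d) mod int k)"

lemma cyc_shift_lt: "0 < k \<Longrightarrow> cyc_shift k a d < k"
  unfolding cyc_shift_def by (simp add: nat_less_iff)

lemma cyc_shift_eq_iff: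
  "0 < k \<Longrightarrow> cyc_shift k a d = cyc_shift k b e \<longleftrightarrow> (int a + d) mod int k = (int b + e) mod int k"
  unfolding cyc_shift_def by (simp add: eq_nat_nat_iff)

lemma cyc_shift_zero: "a < k \<Longrightarrow> cyc_shift k a 0 = a"
  unfolding cyc_shift_def by simp

lemma cyc_shift_of_range: "0 \<le> int a + d \<Longrightarrow> int a + d < int k \<Longrightarrow> cyc_shift k a d = nat (int a + d)"
  unfolding cyc_shift_def by simp

lemma cyc_shift_cyc_shift: "0 < k \<Longrightarrow> cyc_shift k (cyc_shift k a d) e = cyc_shift k a (d + e)"
  unfolding cyc_shift_def by (simp add: mod_add_left_eq add.assoc)

lemma cyc_shift_inj:
  assumes "cyc_shift k a d = cyc_shift k a e" "\<bar>d - e\<bar> < int k"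
  shows "d = e"
proof -
  have "0 < k" using assms(2) by simp
  then have "int k dvd d - e"
    using assms(1) by (simp add: cyc_shift_eq_iff mod_eq_dvd_iff)
  show ?thesis
  proof (rule ccontr)
    assume "d \<noteq> e"
    then have "\<bar>int k\<bar> \<le> \<bar>d - e\<bar>"
      using dvd_imp_le_int[of "d - e" "int k"] \<open>int k dvd d - e\<close> by simp
    then show False using assms(2) by simp
  qed
qed

lemma cyc_adj_iff_cyc_shift:
  assumes "2 \<le> k" "a < k" "b < k"
  shows "cyc_adj k a b \<longleftrightarrow> b = cyc_shift k a 1 \<or> b = cyc_shift k a (-1)"
proof -
  have k: "0 < k" using assms(1) by simp
  have succ: "(x + 1) mod k = cyc_shift k x 1" for x
  proof -
    have "(int x + 1) mod int k = int ((x + 1) mod k)" by (simp add: zmod_int add.commute)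
    then show ?thesis unfolding cyc_shift_def by simp
  qed
  have pred_iff: "a = cyc_shift k b 1 \<longleftrightarrow> b = cyc_shift k a (-1)"
  proof
    assume "a = cyc_shift k b 1"
    then have "cyc_shift k a (-1) = cyc_shift k b 0"
      using cyc_shift_cyc_shift[OF k, of b 1 "-1"] by simp
    then show "b = cyc_shift k a (-1)" using cyc_shift_zero[OF assms(3)] by simp
  next
    assume "b = cyc_shift k a (-1)"
    then have "cyc_shift k b 1 = cyc_shift k a 0"
      using cyc_shift_cyc_shift[OF k, of a "-1" 1] by simp
    then show "a = cyc_shift k b 1" using cyc_shift_zero[OF assms(2)] by simp
  qed
  have adj: "cyc_adj k a b \<longleftrightarrow> a \<noteq> b \<and> (b = cyc_shift k a 1 \<or> a = cyc_shift k b 1)"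
    unfolding cyc_adj_def succ ..
  have moved: "cyc_shift k a d \<noteq> a" if "d = 1 \<or> d = -1" for d
  proof
    assume "cyc_shift k a d = a"
    then have "cyc_shift k a d = cyc_shift k a 0" using cyc_shift_zero[OF assms(2)] by simp
    moreover have "\<bar>d - 0\<bar> < int k" using that assms(1) by auto
    ultimately have "d = 0" by (rule cyc_shift_inj)
    then show False using that by simp
  qed
  have "b = cyc_shift k a 1 \<or> b = cyc_shift k a (-1) \<Longrightarrow> a \<noteq> b"
    using moved[of 1] moved[of "-1"] by auto
  then show ?thesis unfolding adj pred_iff by blast
qed

definition taxicab_norm :: "int \<times> int \<Rightarrow> int" where
  "taxicab_norm d = \<bar>fst d\<bar> + \<bar>snd d\<bar>"

lemma taxicab_norm_eq_1_iff: "taxicab_norm d = 1 \<longleftrightarrow> d \<in> {(1, 0), (-1, 0), (0, 1), (0, -1)}"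
  by (cases d) (auto simp: taxicab_norm_def)

lemma taxicab_norm_eq_2_iff:
  "taxicab_norm d = 2 \<longleftrightarrow> d \<in> {(2, 0), (-2, 0), (0, 2), (0, -2), (1, 1), (1, -1), (-1, 1), (-1, -1)}"
proof -
  obtain a b where d: "d = (a, b)" by (cases d)
  have "\<bar>a\<bar> + \<bar>b\<bar> = 2 \<longleftrightarrow> (a = 2 \<and> b = 0) \<or> (a = -2 \<and> b = 0) \<or> (a = 0 \<and> b = 2) \<or>
      (a = 0 \<and> b = -2) \<or> (a = 1 \<and> b = 1) \<or> (a = 1 \<and> b = -1) \<or> (a = -1 \<and> b = 1) \<or> (a = -1 \<and> b = -1)"
    unfolding abs_if by presburger
  then show ?thesis unfolding d taxicab_norm_def by simp
qed

lemma card_taxicab_sphere_1: "card {d. taxicab_norm d = 1} = 4"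
proof -
  have "{d. taxicab_norm d = 1} = {(1, 0), (-1, 0), (0, 1), (0, -1)}"
    using taxicab_norm_eq_1_iff by blast
  then show ?thesis by simp
qed

lemma card_taxicab_sphere_2: "card {d. taxicab_norm d = 2} = 8"
proof -
  have "{d. taxicab_norm d = 2} = {(2, 0), (-2, 0), (0, 2), (0, -2), (1, 1), (1, -1), (-1, 1), (-1, -1)}"
    using taxicab_norm_eq_2_iff by blast
  then show ?thesis by simp
qed

lemma taxicab_norm_add_eq_1:
  assumes "taxicab_norm d = 1" "taxicab_norm e = 1"
  shows "d + e = 0 \<or> taxicab_norm (d + e) = 2"
  using assms unfolding taxicab_norm_eq_1_iff
  by (elim insertE emptyE) (simp_all add: taxicab_norm_def zero_prod_def)

lemma taxicab_norm_eq_2_split: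
  assumes "taxicab_norm d = 2"
  obtains e where "taxicab_norm e = 1" "taxicab_norm (d - e) = 1"
proof -
  have "\<exists>e\<in>{(1, 0), (-1, 0), (0, 1), (0, -1)}. taxicab_norm (d - e) = 1"
    using assms unfolding taxicab_norm_eq_2_iff
    by (elim insertE emptyE) (simp_all add: taxicab_norm_def)
  then show ?thesis
    using that taxicab_norm_eq_1_iff by blast
qed

definition torus_shift :: "nat \<Rightarrow> nat \<Rightarrow> nat \<times> nat \<Rightarrow> int \<times> int \<Rightarrow> nat \<times> nat" where
  "torus_shift m n v d = (cyc_shift m (fst v) (fst d), cyc_shift n (snd v) (snd d))"

lemma torus_shift_in_torus_V: "0 < m \<Longrightarrow> 0 < n \<Longrightarrow> torus_shift m n v d \<in> torus_V m n"
  unfolding torus_shift_def torus_V_def by (simp add: cyc_shift_lt)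

lemma torus_shift_zero: "v \<in> torus_V m n \<Longrightarrow> torus_shift m n v 0 = v"
  unfolding torus_shift_def torus_V_def by (auto simp: cyc_shift_zero)

lemma torus_shift_add:
  "0 < m \<Longrightarrow> 0 < n \<Longrightarrow> torus_shift m n (torus_shift m n v d) e = torus_shift m n v (d + e)"
  unfolding torus_shift_def by (simp add: cyc_shift_cyc_shift)

lemma torus_shift_inj:
  assumes "torus_shift m n v d = torus_shift m n v e"
    and "\<bar>fst d - fst e\<bar> < int m" "\<bar>snd d - snd e\<bar> < int n"
  shows "d = e"
proof -
  have "fst d = fst e" "snd d = snd e"
    using assms cyc_shift_inj[of m "fst v" "fst d" "fst e"] cyc_shift_inj[of n "snd v" "snd d" "snd e"]
    unfolding torus_shift_def by simp_all
  then show ?thesis by (simp add: prod_eq_iff)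
qed

lemma cyc_adj_commute: "cyc_adj k a b \<longleftrightarrow> cyc_adj k b a"
  unfolding cyc_adj_def by blast

lemma torus_E_commute: "torus_E m n p q \<longleftrightarrow> torus_E m n q p"
  unfolding torus_E_def by (metis cyc_adj_commute)

lemma finite_torus_V: "finite (torus_V m n)"
  unfolding torus_V_def by simp

lemma card_torus_V: "card (torus_V m n) = m * n"
  unfolding torus_V_def by (simp add: card_cartesian_product)

lemma torus_E_iff_torus_shift:
  assumes "2 \<le> m" "2 \<le> n" "v \<in> torus_V m n" "u \<in> torus_V m n"
  shows "torus_E m n v u \<longleftrightarrow> (\<exists>d. taxicab_norm d = 1 \<and> u = torus_shift m n v d)"
proof -
  obtain a b c e where v: "v = (a, b)" "a < m" "b < n" and u: "u = (c, e)" "c < m" "e < n"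
    using assms(3,4) unfolding torus_V_def by auto
  have "(\<exists>d. taxicab_norm d = 1 \<and> u = torus_shift m n v d) \<longleftrightarrow>
      (\<exists>d\<in>{(1, 0), (-1, 0), (0, 1), (0, -1)}. u = torus_shift m n v d)"
    using taxicab_norm_eq_1_iff by blast
  also have "\<dots> \<longleftrightarrow> (b = e \<and> (c = cyc_shift m a 1 \<or> c = cyc_shift m a (-1))) \<or>
      (a = c \<and> (e = cyc_shift n b 1 \<or> e = cyc_shift n b (-1)))"
    using u v by (auto simp: torus_shift_def cyc_shift_zero)
  also have "\<dots> \<longleftrightarrow> torus_E m n v u"
    using u v assms(1,2) by (auto simp: torus_E_def cyc_adj_iff_cyc_shift)
  finally show ?thesis ..
qed

lemma nbhd_torus:
  assumes "2 \<le> m" "2 \<le> n" "v \<in> torus_V m n"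
  shows "nbhd (torus_V m n) (torus_E m n) v = torus_shift m n v ` {d. taxicab_norm d = 1}"
proof -
  have "u \<in> torus_V m n \<and> torus_E m n v u \<longleftrightarrow> u \<in> torus_shift m n v ` {d. taxicab_norm d = 1}"
    for u
    using torus_E_iff_torus_shift[OF assms, of u] torus_shift_in_torus_V[of m n v] assms(1,2)
    by auto
  then show ?thesis unfolding nbhd_def by blast
qed

lemma nbhd2_torus:
  assumes "4 \<le> m" "4 \<le> n" "v \<in> torus_V m n"
  shows "nbhd2 (torus_V m n) (torus_E m n) v = torus_shift m n v ` {d. taxicab_norm d = 2}"
proof (intro equalityI subsetI)
  have pos: "0 < m" "0 < n" using assms(1,2) by simp_all
  have E_iff: "torus_E m n x y \<longleftrightarrow> (\<exists>d. taxicab_norm d = 1 \<and> y = torus_shift m n x d)"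
    if "x \<in> torus_V m n" "y \<in> torus_V m n" for x y
    using torus_E_iff_torus_shift[OF _ _ that] assms(1,2) by simp
  {
    fix u assume "u \<in> nbhd2 (torus_V m n) (torus_E m n) v"
    then obtain w where u: "u \<in> torus_V m n" "u \<noteq> v"
      and w: "w \<in> torus_V m n" "torus_E m n v w" "torus_E m n w u"
      unfolding nbhd2_def by blast
    obtain d e where d: "taxicab_norm d = 1" "w = torus_shift m n v d"
      and e: "taxicab_norm e = 1" "u = torus_shift m n w e"
      using E_iff[OF assms(3) w(1)] E_iff[OF w(1) u(1)] w(2,3) by blast
    have u_eq: "u = torus_shift m n v (d + e)"
      using d(2) e(2) torus_shift_add[OF pos] by simp
    then have "d + e \<noteq> 0"
      using u(2) torus_shift_zero[OF assms(3)] by auto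
    then show "u \<in> torus_shift m n v ` {d. taxicab_norm d = 2}"
      using taxicab_norm_add_eq_1[OF d(1) e(1)] u_eq by blast
  }
  {
    fix u assume "u \<in> torus_shift m n v ` {d. taxicab_norm d = 2}"
    then obtain d where d: "taxicab_norm d = 2" "u = torus_shift m n v d" by blast
    obtain e where e: "taxicab_norm e = 1" "taxicab_norm (d - e) = 1"
      using taxicab_norm_eq_2_split[OF d(1)] .
    define w where "w = torus_shift m n v e"
    have V: "u \<in> torus_V m n" "w \<in> torus_V m n"
      unfolding d(2) w_def using torus_shift_in_torus_V[OF pos] by auto
    have "u = torus_shift m n w (d - e)"
      unfolding w_def d(2) torus_shift_add[OF pos] by simp
    then have E: "torus_E m n v w" "torus_E m n w u"
      using E_iff[OF assms(3) V(2)] E_iff[OF V(2) V(1)] e w_def by blast+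
    \<comment> \<open>offsets of norm \<le> 2 differ by at most 3 per coordinate, less than m and n\<close>
    have distinct: "d' = d" if "torus_shift m n v d' = u" "taxicab_norm d' \<le> 1" for d'
    proof (rule torus_shift_inj)
      show "torus_shift m n v d' = torus_shift m n v d" using that(1) d(2) by simp
      show "\<bar>fst d' - fst d\<bar> < int m" "\<bar>snd d' - snd d\<bar> < int n"
        using that(2) d(1) assms(1,2) unfolding taxicab_norm_def by auto
    qed
    have "u \<noteq> v"
      using distinct[of 0] torus_shift_zero[OF assms(3)] d(1) by (auto simp: taxicab_norm_def)
    moreover have "\<not> torus_E m n v u"
      using E_iff[OF assms(3) V(1)] distinct d(1) by force
    ultimately show "u \<in> nbhd2 (torus_V m n) (torus_E m n) v"
      unfolding nbhd2_def using V E by blast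
  }
qed

lemma card_nbhd_torus_le:
  "2 \<le> m \<Longrightarrow> 2 \<le> n \<Longrightarrow> v \<in> torus_V m n \<Longrightarrow> card (nbhd (torus_V m n) (torus_E m n) v) \<le> 4"
  using card_image_le[of "{d. taxicab_norm d = 1}" "torus_shift m n v"] card_taxicab_sphere_1
  by (simp add: nbhd_torus card_ge_0_finite)

lemma card_nbhd2_torus_le:
  "4 \<le> m \<Longrightarrow> 4 \<le> n \<Longrightarrow> v \<in> torus_V m n \<Longrightarrow> card (nbhd2 (torus_V m n) (torus_E m n) v) \<le> 8"
  using card_image_le[of "{d. taxicab_norm d = 2}" "torus_shift m n v"] card_taxicab_sphere_2
  by (simp add: nbhd2_torus card_ge_0_finite)

section \<open>A disjunctive dominating set of the torus\<close>

lemma torus_disj_dom_condition: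
  assumes "4 \<le> m" "4 \<le> n" "v \<in> torus_V m n" "v \<notin> S"
    and "torus_shift m n v p \<in> S" "torus_shift m n v q \<in> S"
    and "torus_shift m n v p \<noteq> torus_shift m n v q"
    and "taxicab_norm p + taxicab_norm q \<le> 4"
  shows "1 \<le> card (nbhd (torus_V m n) (torus_E m n) v \<inter> S)
    \<or> 2 \<le> card (nbhd2 (torus_V m n) (torus_E m n) v \<inter> S)"
proof -
  let ?V = "torus_V m n" and ?E = "torus_E m n"
  have fin: "finite (N \<inter> S)" if "N \<subseteq> ?V" for N
    using that finite_subset[OF _ finite_torus_V] by blast
  have near: "1 \<le> card (nbhd ?V ?E v \<inter> S)"
    if "torus_shift m n v r \<in> S" "taxicab_norm r \<le> 1" for r
  proof -
    have "r \<noteq> 0" using that(1) assms(3,4) torus_shift_zero by metis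
    then have "taxicab_norm r = 1"
      using that(2) by (cases r) (auto simp: taxicab_norm_def zero_prod_def)
    then have "torus_shift m n v r \<in> nbhd ?V ?E v \<inter> S"
      using nbhd_torus[of m n v] that(1) assms(1-3) by auto
    then show ?thesis
      using fin[OF nbhd_subset] by (metis One_nat_def Suc_leI card_gt_0_iff empty_iff)
  qed
  consider "taxicab_norm p \<le> 1" | "taxicab_norm q \<le> 1"
    | "taxicab_norm p = 2" "taxicab_norm q = 2"
    using assms(8) by linarith
  then show ?thesis
  proof cases
    case 3
    then have "{torus_shift m n v p, torus_shift m n v q} \<subseteq> nbhd2 ?V ?E v \<inter> S"
      using nbhd2_torus[OF assms(1-3)] assms(5,6) by blast
    moreover have "card {torus_shift m n v p, torus_shift m n v q} = 2"
      using assms(7) by simp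
    ultimately show ?thesis
      using card_mono[OF fin[OF nbhd2_subset]] by metis
  qed (use near assms(5,6) in blast)+
qed

definition dist_sum_le_2 :: "nat \<Rightarrow> nat set \<Rightarrow> nat set \<Rightarrow> nat \<Rightarrow> bool" where
  "dist_sum_le_2 k A B x \<longleftrightarrow>
     (\<exists>d e. \<bar>d\<bar> + \<bar>e\<bar> \<le> 2 \<and> cyc_shift k x d \<in> A \<and> cyc_shift k x e \<in> B)"

lemma dist_sum_le_2I:
  "\<bar>d\<bar> + \<bar>e\<bar> \<le> 2 \<Longrightarrow> cyc_shift k x d \<in> A \<Longrightarrow> cyc_shift k x e \<in> B \<Longrightarrow>
    dist_sum_le_2 k A B x"
  unfolding dist_sum_le_2_def by blast

lemma disj_dom_set_torus_product_union:
  assumes "4 \<le> m" "4 \<le> n" "A \<subseteq> {..<m}" "B \<subseteq> {..<m}" "A \<inter> B = {}"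
    and "A' \<subseteq> {..<n}" "B' \<subseteq> {..<n}"
    and "\<And>x. x < m \<Longrightarrow> dist_sum_le_2 m A B x" "\<And>y. y < n \<Longrightarrow> dist_sum_le_2 n A' B' y"
  shows "disj_dom_set (torus_V m n) (torus_E m n) (A \<times> A' \<union> B \<times> B')"
proof -
  let ?S = "A \<times> A' \<union> B \<times> B'"
  have "1 \<le> card (nbhd (torus_V m n) (torus_E m n) v \<inter> ?S)
      \<or> 2 \<le> card (nbhd2 (torus_V m n) (torus_E m n) v \<inter> ?S)"
    if v: "v \<in> torus_V m n - ?S" for v
  proof -
    obtain i j where ij: "v = (i, j)" "i < m" "j < n" using v unfolding torus_V_def by auto
    obtain d1 d2 where d: "\<bar>d1\<bar> + \<bar>d2\<bar> \<le> 2" "cyc_shift m i d1 \<in> A" "cyc_shift m i d2 \<in> B"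
      using assms(8)[OF ij(2)] unfolding dist_sum_le_2_def by blast
    obtain e1 e2 where e: "\<bar>e1\<bar> + \<bar>e2\<bar> \<le> 2" "cyc_shift n j e1 \<in> A'" "cyc_shift n j e2 \<in> B'"
      using assms(9)[OF ij(3)] unfolding dist_sum_le_2_def by blast
    have in_A: "torus_shift m n v (d1, e1) \<in> A \<times> A'"
      and in_B: "torus_shift m n v (d2, e2) \<in> B \<times> B'"
      unfolding torus_shift_def ij(1) using d e by simp_all
    then have "torus_shift m n v (d1, e1) \<noteq> torus_shift m n v (d2, e2)"
      using assms(5) by auto
    moreover have "taxicab_norm (d1, e1) + taxicab_norm (d2, e2) \<le> 4"
      unfolding taxicab_norm_def using d(1) e(1) by simp
    moreover have "v \<in> torus_V m n" "v \<notin> ?S" using v by simp_all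
    ultimately show ?thesis
      using torus_disj_dom_condition[OF assms(1,2), of v ?S "(d1, e1)" "(d2, e2)"] in_A in_B
      by blast
  qed
  moreover have "?S \<subseteq> torus_V m n" using assms(3,4,6,7) unfolding torus_V_def by auto
  ultimately show ?thesis unfolding disj_dom_set_def by blast
qed

definition mod4_zeros :: "nat \<Rightarrow> nat set" where
  "mod4_zeros k = {x. x < k \<and> x mod 4 = 0}"

(* For k mod 4 = 2 the vertex k - 1 is added: otherwise it would be at distance 1 from
   mod4_zeros k (through 0 and k - 2) but at distance 3 from the vertices that are 2 mod 4. *)
definition mod4_twos :: "nat \<Rightarrow> nat set" where
  "mod4_twos k = {x. x < k \<and> (x mod 4 = 2 \<or> (k mod 4 = 2 \<and> x = k - 1))}"

lemma cyc_shift_mod_4: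
  assumes "0 \<le> int x + d" "int x + d < int k"
  shows "int (cyc_shift k x d mod 4) = (int x + d) mod 4"
  using assms unfolding cyc_shift_def by (simp add: zmod_int)

lemma cyc_shift_in_mod4_zeros:
  assumes "0 \<le> int x + d" "int x + d < int k" "(int x + d) mod 4 = 0"
  shows "cyc_shift k x d \<in> mod4_zeros k"
  using cyc_shift_mod_4[OF assms(1,2)] cyc_shift_lt[of k x d] assms
  unfolding mod4_zeros_def by simp

lemma cyc_shift_in_mod4_twos:
  assumes "0 \<le> int x + d" "int x + d < int k" "(int x + d) mod 4 = 2"
  shows "cyc_shift k x d \<in> mod4_twos k"
  using cyc_shift_mod_4[OF assms(1,2)] cyc_shift_lt[of k x d] assms
  unfolding mod4_twos_def by simp

lemma cyc_shift_in_mod4_twos_last: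
  assumes "int x + d = int k - 1" "int k mod 4 = 2"
  shows "cyc_shift k x d \<in> mod4_twos k"
proof -
  have "int (k mod 4) = 2" using assms(2) by (simp add: zmod_int)
  then have k: "k mod 4 = 2" "0 < k" by (simp_all add: gr0I)
  then have "int x + d = int (k - 1)" using assms(1) by (simp add: of_nat_diff)
  then have "cyc_shift k x d = k - 1" using k(2) cyc_shift_of_range[of x d k] by simp
  then show ?thesis using k unfolding mod4_twos_def by simp
qed

lemma cyc_shift_in_mod4_zeros_wrap:
  assumes "int x + d = int k" "0 < k"
  shows "cyc_shift k x d \<in> mod4_zeros k"
  using assms unfolding cyc_shift_def mod4_zeros_def by simp

lemma dist_sum_le_2_mod4_0:
  assumes "4 \<le> k" "x < k" "int x mod 4 = 0"
  shows "dist_sum_le_2 k (mod4_zeros k) (mod4_twos k) x"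
proof -
  have zeros: "cyc_shift k x 0 \<in> mod4_zeros k"
    by (rule cyc_shift_in_mod4_zeros) (use assms(2,3) in simp_all)
  consider (far) "int x + 2 < int k" | (second_last) "int x + 2 = int k" | (last) "int x + 1 = int k"
    using assms(2) by linarith
  then show ?thesis
  proof cases
    case far
    have "cyc_shift k x 2 \<in> mod4_twos k"
      by (rule cyc_shift_in_mod4_twos) (use far assms(3) in presburger)+
    then show ?thesis using dist_sum_le_2I[of 0 2, OF _ zeros] by simp
  next
    case second_last
    have "cyc_shift k x 1 \<in> mod4_twos k"
      by (rule cyc_shift_in_mod4_twos_last) (use second_last assms(3) in presburger)+
    then show ?thesis using dist_sum_le_2I[of 0 1, OF _ zeros] by simp
  next
    case last
    have "cyc_shift k x (-2) \<in> mod4_twos k"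
      by (rule cyc_shift_in_mod4_twos) (use last assms in presburger)+
    then show ?thesis using dist_sum_le_2I[of 0 "-2", OF _ zeros] by simp
  qed
qed

lemma dist_sum_le_2_mod4:
  assumes "4 \<le> k" "x < k"
  shows "dist_sum_le_2 k (mod4_zeros k) (mod4_twos k) x"
proof -
  note zero = cyc_shift_in_mod4_zeros[of x _ k] and two = cyc_shift_in_mod4_twos[of x _ k]
  have "int x mod 4 = int (x mod 4)" by (simp add: zmod_int)
  then consider (r0) "int x mod 4 = 0" | (r1) "int x mod 4 = 1" | (r2) "int x mod 4 = 2"
    | (r3) "int x mod 4 = 3"
    by arith
  then show ?thesis
  proof cases
    case r0
    then show ?thesis by (rule dist_sum_le_2_mod4_0[OF assms])
  next
    case r1
    have zeros: "cyc_shift k x (-1) \<in> mod4_zeros k" by (rule zero) (use assms(2) r1 in presburger)+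
    consider (far) "int x + 1 < int k" | (last) "int x + 1 = int k" using assms(2) by linarith
    then show ?thesis
    proof cases
      case far
      have "cyc_shift k x 1 \<in> mod4_twos k" by (rule two) (use far r1 in presburger)+
      then show ?thesis using dist_sum_le_2I[of "-1" 1, OF _ zeros] by simp
    next
      case last
      have "cyc_shift k x 0 \<in> mod4_twos k"
        by (rule cyc_shift_in_mod4_twos_last) (use last r1 in presburger)+
      then show ?thesis using dist_sum_le_2I[of "-1" 0, OF _ zeros] by simp
    qed
  next
    case r2
    have twos: "cyc_shift k x 0 \<in> mod4_twos k" by (rule two) (use assms(2) r2 in simp_all)
    have "cyc_shift k x (-2) \<in> mod4_zeros k" by (rule zero) (use assms(2) r2 in presburger)+
    then show ?thesis using dist_sum_le_2I[of "-2" 0, OF _ _ twos] by simp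
  next
    case r3
    have twos: "cyc_shift k x (-1) \<in> mod4_twos k" by (rule two) (use assms(2) r3 in presburger)+
    consider (far) "int x + 1 < int k" | (last) "int x + 1 = int k" using assms(2) by linarith
    then have "cyc_shift k x 1 \<in> mod4_zeros k"
    proof cases
      case far
      show ?thesis by (rule zero) (use far r3 in presburger)+
    next
      case last
      show ?thesis by (rule cyc_shift_in_mod4_zeros_wrap) (use last assms(2) in simp_all)
    qed
    then show ?thesis using dist_sum_le_2I[of 1 "-1", OF _ _ twos] by simp
  qed
qed

lemma disj_dom_set_torus_mod4:
  assumes "4 \<le> m" "4 \<le> n"
  shows "disj_dom_set (torus_V m n) (torus_E m n)
    (mod4_zeros m \<times> mod4_zeros n \<union> mod4_twos m \<times> mod4_twos n)"
proof (rule disj_dom_set_torus_product_union[OF assms])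
  have "x \<notin> mod4_twos m" if "x \<in> mod4_zeros m" for x
  proof
    assume "x \<in> mod4_twos m"
    with that have "x mod 4 = 0" "m mod 4 = 2" "x + 1 = m"
      unfolding mod4_zeros_def mod4_twos_def by auto
    then show False by presburger
  qed
  then show "mod4_zeros m \<inter> mod4_twos m = {}" by blast
  show "mod4_zeros m \<subseteq> {..<m}" "mod4_twos m \<subseteq> {..<m}"
    "mod4_zeros n \<subseteq> {..<n}" "mod4_twos n \<subseteq> {..<n}"
    unfolding mod4_zeros_def mod4_twos_def by auto
  show "dist_sum_le_2 m (mod4_zeros m) (mod4_twos m) x" if "x < m" for x
    using dist_sum_le_2_mod4[OF assms(1) that] .
  show "dist_sum_le_2 n (mod4_zeros n) (mod4_twos n) y" if "y < n" for y
    using dist_sum_le_2_mod4[OF assms(2) that] .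
qed

lemma card_mod4_zeros_le: "card (mod4_zeros k) \<le> (k + 3) div 4"
proof -
  let ?f = "\<lambda>j. 4 * j"
  have "mod4_zeros k \<subseteq> ?f ` {..<(k + 3) div 4}"
  proof
    fix x assume x: "x \<in> mod4_zeros k"
    have "x mod 4 = 0" "x < k" using x unfolding mod4_zeros_def by simp_all
    then have "x = ?f (x div 4)" "x div 4 < (k + 3) div 4" by presburger+
    then show "x \<in> ?f ` {..<(k + 3) div 4}" by blast
  qed
  then have "card (mod4_zeros k) \<le> card (?f ` {..<(k + 3) div 4})"
    by (rule card_mono[OF finite_imageI[OF finite_lessThan]])
  also have "\<dots> \<le> (k + 3) div 4"
    using card_image_le[OF finite_lessThan, of ?f] by simp
  finally show ?thesis .
qed

lemma card_mod4_twos_le: "card (mod4_twos k) \<le> (k + 3) div 4"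
proof -
  let ?f = "\<lambda>j. min (4 * j + 2) (k - 1)"
  have "mod4_twos k \<subseteq> ?f ` {..<(k + 3) div 4}"
  proof
    fix x assume x: "x \<in> mod4_twos k"
    show "x \<in> ?f ` {..<(k + 3) div 4}"
    proof (cases "x mod 4 = 2")
      case True
      have "x < k" using x unfolding mod4_twos_def by simp
      then have "x = ?f (x div 4)" "x div 4 < (k + 3) div 4" using True by presburger+
      then show ?thesis by blast
    next
      case False
      then have "k mod 4 = 2" "x = k - 1" using x unfolding mod4_twos_def by auto
      then have "x = ?f (k div 4)" "k div 4 < (k + 3) div 4" by presburger+
      then show ?thesis by blast
    qed
  qed
  then have "card (mod4_twos k) \<le> card (?f ` {..<(k + 3) div 4})"
    by (rule card_mono[OF finite_imageI[OF finite_lessThan]])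
  also have "\<dots> \<le> (k + 3) div 4"
    using card_image_le[OF finite_lessThan, of ?f] by simp
  finally show ?thesis .
qed

lemma card_torus_mod4_le:
  "card (mod4_zeros m \<times> mod4_zeros n \<union> mod4_twos m \<times> mod4_twos n)
     \<le> 2 * ((m + 3) div 4 * ((n + 3) div 4))"
proof -
  have "card (mod4_zeros m \<times> mod4_zeros n \<union> mod4_twos m \<times> mod4_twos n)
      \<le> card (mod4_zeros m \<times> mod4_zeros n) + card (mod4_twos m \<times> mod4_twos n)"
    by (rule card_Un_le)
  also have "\<dots> = card (mod4_zeros m) * card (mod4_zeros n) + card (mod4_twos m) * card (mod4_twos n)"
    by (simp add: card_cartesian_product)
  also have "\<dots> \<le> (m + 3) div 4 * ((n + 3) div 4) + (m + 3) div 4 * ((n + 3) div 4)"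
    using card_mod4_zeros_le card_mod4_twos_le by (intro add_mono mult_le_mono)
  finally show ?thesis by simp
qed

lemma ceiling_of_nat_div_4: "\<lceil>real k / 4\<rceil> = int ((k + 3) div 4)"
proof (rule ceiling_unique)
  have "4 * ((k + 3) div 4) \<le> k + 3" "k \<le> 4 * ((k + 3) div 4)" by presburger+
  then have "real (4 * ((k + 3) div 4)) \<le> real (k + 3)" "real k \<le> real (4 * ((k + 3) div 4))"
    by (simp_all only: of_nat_le_iff)
  then show "real_of_int (int ((k + 3) div 4)) - 1 < real k / 4"
    and "real k / 4 \<le> real_of_int (int ((k + 3) div 4))"
    by simp_all
qed

theorem theorem1:
  fixes m n :: nat
  assumes "m \<ge> 5" and "n \<ge> 5"
  shows "real (m * n) / 9 \<le> real (disj_dom_number (torus_V m n) (torus_E m n))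
       \<and> real (disj_dom_number (torus_V m n) (torus_E m n))
           \<le> 2 * real_of_int (\<lceil>real m / 4\<rceil> * \<lceil>real n / 4\<rceil>)"
proof -
  let ?V = "torus_V m n" and ?E = "torus_E m n"
  let ?N = "disj_dom_number ?V ?E"
    and ?S = "mod4_zeros m \<times> mod4_zeros n \<union> mod4_twos m \<times> mod4_twos n"
  have mn: "4 \<le> m" "4 \<le> n" using assms by simp_all
  obtain S where S: "disj_dom_set ?V ?E S" "card S = ?N"
    using disj_dom_number_attained[OF finite_torus_V] .
  have "2 * card ?V \<le> (2 + 2 * 4 + 8) * card S"
    by (rule disj_dom_set_card_lower_bound[OF finite_torus_V S(1) torus_E_commute])
      (use card_nbhd_torus_le card_nbhd2_torus_le mn in auto)
  then have "real (m * n) \<le> real (9 * ?N)"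
    unfolding card_torus_V S(2) of_nat_le_iff by simp
  then have lower: "real (m * n) / 9 \<le> real ?N" by simp
  have "?N \<le> card ?S"
    by (rule disj_dom_number_le[OF finite_torus_V disj_dom_set_torus_mod4[OF mn]])
  also have "\<dots> \<le> 2 * ((m + 3) div 4 * ((n + 3) div 4))"
    by (rule card_torus_mod4_le)
  finally have "real ?N \<le> real (2 * ((m + 3) div 4 * ((n + 3) div 4)))"
    by (simp only: of_nat_le_iff)
  then have upper: "real ?N \<le> 2 * real_of_int (\<lceil>real m / 4\<rceil> * \<lceil>real n / 4\<rceil>)"
    unfolding ceiling_of_nat_div_4 by simp
  from lower upper show ?thesis ..
qed

end
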